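(* Consider the $l$-th cycle of RPF-SFISTA and assume $\mu=\mu_{l-1}\in(0,\bar\mu]$. For $j\ge0$ and $x\in\mathcal H$ let $\sigma_j(x):=A_j[\phi(y_j)-\phi(x)]+\frac{\tau_j}{2}\|x-x_j\|^2$. Then for every iteration index $j\ge1$ generated in this cycle and every $x\in\mathcal H$, $$\sigma_{j-1}(x)-\sigma_j(x)\ \ge\ \frac{\chi A_jL_j}{2}\|y_j-\tilde x_{j-1}\|^2.$$
   Context: Setup. Let $f:\mathbb R^n\to\mathbb R$ be convex and differentiable with $\|\nabla f(z')-\nabla f(z)\|\le\bar L\|z'-z\|$ for all $z,z'\in\mathbb R^n$ (some $\bar L\ge0$). Let $h:\mathbb R^n\to(-\infty,\infty]$ be proper, lower semicontinuous and convex with domain $\mathcal H$. Let $\phi:=f+h$ be $\bar\mu$-strongly convex for some $\bar\mu>0$. Write $\ell_f(u;x):=f(x)+\langle\nabla f(x),u-x\rangle$. RPF-SFISTA. Parameters $\chi\in(0,1)$, $\beta>1$; inputs $\mu_0>0$, $\bar M_0>0$, $z_0\in\mathcal H$, $\hat\epsilon>0$. The method runs in cycles $l=1,2,\dots$. At the start of cycle $l$: choose $\underline M_l\in[\max\{\bar M_{l-1}/4,\bar M_0\},\bar M_{l-1}]$ (so $\underline M_1=\bar M_0$), set $\mu:=\mu_{l-1}$, $x_0:=z_{l-1}$, $\xi_0:=y_0:=x_0$, $A_0:=0$, $\tau_0:=1$, $L_0:=\underline M_l$. Then for $j=1,2,\dots$: (i) set $L_j:=L_{j-1}$; (ii) compute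 $a_{j-1}=\frac{\tau_{j-1}+\sqrt{\tau_{j-1}^2+4\tau_{j-1}A_{j-1}L_j}}{2L_j}$, $\tilde x_{j-1}=\frac{A_{j-1}y_{j-1}+a_{j-1}x_{j-1}}{A_{j-1}+a_{j-1}}$, $y_j=\arg\min_{u}\{\ell_f(u;\tilde x_{j-1})+h(u)+\frac{L_j}{2}\|u-\tilde x_{j-1}\|^2\}$; if $f(y_j)\le\ell_f(y_j;\tilde x_{j-1})+\frac{(1-\chi)L_j}{4}\|y_j-\tilde x_{j-1}\|^2$ go to (iii), otherwise replace $L_j$ by $\beta L_j$ and repeat (ii); (iii) set $\xi_j:=y_j$ if $\phi(y_j)\le\phi(\xi_{j-1})$ and $\xi_j:=\xi_{j-1}$ otherwise; $A_j:=A_{j-1}+a_{j-1}$; $\tau_j:=\tau_{j-1}+a_{j-1}\mu/2$; $s_j:=L_j(\tilde x_{j-1}-y_j)$; $x_j:=\tau_j^{-1}[\mu a_{j-1}y_j/2+\tau_{j-1}x_{j-1}-a_{j-1}s_j]$; $v_j:=\nabla f(y_j)-\nabla f(\tilde x_{j-1})+s_j$; (iv) if $\|\xi_j-x_0\|^2<\chi A_jL_j\|y_j-\tilde x_{j-1}\|^2$, the cycle ends with a restart: set $z_l:=\xi_j$, $\bar M_l:=L_j$, $\mu_l:=\mu/2$ and start cycle $l+1$; (v) otherwise, if $\|v_j\|\le\hat\epsilon$, stop and output $(y,v,\xi,L):=(y_j,v_j,\xi_j,L_j)$; else go to iteration $j+1$. In these formulas $L_j$, $a_{j-1}$, $\tilde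 x_{j-1}$, $y_j$ denote the final (accepted) values after the line search in (ii). *)

theory Defs
  imports "HOL-Analysis.Analysis"
begin

definition ext_fun :: "('a \<Rightarrow> real) \<Rightarrow> 'a set \<Rightarrow> 'a \<Rightarrow> ereal" where
  "ext_fun h H x = (if x \<in> H then ereal (h x) else \<infinity>)"

definition proper_lsc_convex :: "('a::real_normed_vector \<Rightarrow> real) \<Rightarrow> 'a set \<Rightarrow> bool" where
  "proper_lsc_convex h H \<longleftrightarrow> H \<noteq> {} \<and> convex H \<and> convex_on H h \<and>
     (\<forall>c::real. closed {x. ext_fun h H x \<le> ereal c})"

text \<open>phi (real-valued on its domain H, +infinity outside) is mu-strongly convex.\<close>
definition strongly_convex_on :: "'a set \<Rightarrow> ('a::real_normed_vector \<Rightarrow> real) \<Rightarrow> real \<Rightarrow> bool" where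
  "strongly_convex_on H phi m \<longleftrightarrow> convex H \<and>
     (\<forall>x\<in>H. \<forall>y\<in>H. \<forall>t::real. 0 \<le> t \<and> t \<le> 1 \<longrightarrow>
        phi (t *\<^sub>R x + (1 - t) *\<^sub>R y) \<le> t * phi x + (1 - t) * phi y - m / 2 * t * (1 - t) * (norm (x - y))\<^sup>2)"

definition lin_f :: "('a::real_inner \<Rightarrow> real) \<Rightarrow> ('a \<Rightarrow> 'a) \<Rightarrow> 'a \<Rightarrow> 'a \<Rightarrow> real" where
  "lin_f f gf u x = f x + inner (gf x) (u - x)"

end

theory Submission
  imports Defs
begin

(*
  Optimality of the prox-gradient point y, tested along segments, makes s = L (xt - y) a
  subgradient at y of the model l_f(.; xt) + h, and the line-search test bounds phi y by that
  model up to (1 - chi) L/4 |y - xt|^2.  Strong convexity at midpoints turns this into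
    phi u >= phi y + <s, u - y> + mu/4 |u - y|^2 - (1 - chi) L/2 |y - xt|^2.
  Adding A_{j-1} times this bound at y_{j-1} and a_{j-1} times it at z, the s-terms combine
  (as A_j xt = A_{j-1} y_{j-1} + a_{j-1} x_{j-1}) with the tau-terms into a quadratic in z whose
  minimum loses a^2 |s|^2 / (2 tau_{j-1}), and this equals A_j L_j |y - xt|^2 / 2 by the
  choice of a_{j-1}.
*)

lemma lin_f_le_convex:
  fixes f :: "'a::real_inner \<Rightarrow> real"
  assumes deriv: "\<And>z. (f has_derivative (\<lambda>d. inner (gf z) d)) (at z)"
    and convex: "convex_on UNIV f"
  shows "lin_f f gf u x \<le> f u"
proof -
  define g where "g t = f (x + t *\<^sub>R (u - x))" for t :: real
  have "convex_on UNIV g"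
  proof (rule convex_onI)
    fix t s1 s2 :: real assume t: "0 < t" "t < 1"
    have "x + ((1 - t) * s1 + t * s2) *\<^sub>R (u - x)
        = (1 - t) *\<^sub>R (x + s1 *\<^sub>R (u - x)) + t *\<^sub>R (x + s2 *\<^sub>R (u - x))"
      by (simp add: algebra_simps)
    then show "g ((1 - t) *\<^sub>R s1 + t *\<^sub>R s2) \<le> (1 - t) * g s1 + t * g s2"
      unfolding g_def using convex_onD[OF convex, of t] t by simp
  qed simp
  moreover have "(g has_field_derivative inner (gf x) (u - x)) (at 0)"
  proof -
    have "((\<lambda>t. x + t *\<^sub>R (u - x)) has_derivative (\<lambda>t. t *\<^sub>R (u - x))) (at 0)"
      by (auto intro!: derivative_eq_intros)
    from has_derivative_compose[OF this deriv]
    have "(g has_derivative (\<lambda>t. inner (gf x) (t *\<^sub>R (u - x)))) (at 0)"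
      unfolding g_def o_def by simp
    moreover have "(\<lambda>t. inner (gf x) (t *\<^sub>R (u - x))) = (*) (inner (gf x) (u - x))" by auto
    ultimately show ?thesis unfolding has_field_derivative_def by simp
  qed
  ultimately have "inner (gf x) (u - x) \<le> g 1 - g 0"
    using convex_on_imp_above_tangent[of UNIV g 0 1] by simp
  then show ?thesis unfolding g_def lin_f_def by simp
qed

lemma convex_on_lin_f:
  assumes "convex S"
  shows "convex_on S (\<lambda>u. lin_f f gf u x)"
proof (rule convex_onI)
  fix t :: real and u v
  show "lin_f f gf ((1 - t) *\<^sub>R u + t *\<^sub>R v) x \<le> (1 - t) * lin_f f gf u x + t * lin_f f gf v x"
    unfolding lin_f_def by (simp add: inner_diff_right inner_add_right algebra_simps)
qed (rule assms)

lemma power2_norm_add: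
  fixes p q :: "'a::real_inner"
  shows "(norm (p + q))\<^sup>2 = (norm p)\<^sup>2 + 2 * inner p q + (norm q)\<^sup>2"
  using dot_norm[of p q] by simp

lemma prox_argmin_subgradient:
  fixes g :: "'a::real_inner \<Rightarrow> real"
  assumes H: "convex H" and g: "convex_on H g" and yH: "y \<in> H" and wH: "w \<in> H"
    and argmin: "\<And>u. u \<in> H \<Longrightarrow> g y + L / 2 * (norm (y - xt))\<^sup>2 \<le> g u + L / 2 * (norm (u - xt))\<^sup>2"
  shows "g y + inner (L *\<^sub>R (xt - y)) (w - y) \<le> g w"
proof -
  define G where "G = g w - g y - inner (L *\<^sub>R (xt - y)) (w - y)"
  \<comment> \<open>compare y with the points of the segment from y to w, divide by e and let e tend to 0\<close>
  have "0 \<le> G + e * (L / 2 * (norm (w - y))\<^sup>2)" if e: "0 < e" "e < 1" for e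
  proof -
    define u where "u = (1 - e) *\<^sub>R y + e *\<^sub>R w"
    have "u \<in> H" unfolding u_def using H yH wH e by (simp add: convex_def)
    have "u - xt = (y - xt) + e *\<^sub>R (w - y)" unfolding u_def by (simp add: algebra_simps)
    then have u_xt: "(norm (u - xt))\<^sup>2
        = (norm (y - xt))\<^sup>2 + 2 * e * inner (y - xt) (w - y) + e\<^sup>2 * (norm (w - y))\<^sup>2"
      by (simp only: power2_norm_add) (simp add: power_mult_distrib)
    have "g y + L / 2 * (norm (y - xt))\<^sup>2 \<le> g u + L / 2 * (norm (u - xt))\<^sup>2"
      using argmin[OF \<open>u \<in> H\<close>] .
    also have "g u \<le> (1 - e) * g y + e * g w"
      unfolding u_def using convex_onD[OF g, of e y w] e yH wH by simp
    finally have "0 \<le> e * (G + e * (L / 2 * (norm (w - y))\<^sup>2))"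
      unfolding u_xt G_def
      by (simp add: inner_diff_left algebra_simps power2_eq_square)
    then show ?thesis using e by (simp add: zero_le_mult_iff)
  qed
  then have "eventually (\<lambda>e. 0 \<le> G + e * (L / 2 * (norm (w - y))\<^sup>2)) (at_right 0)"
    by (auto simp: eventually_at_right_field intro: exI[of _ 1])
  moreover have "((\<lambda>e. G + e * (L / 2 * (norm (w - y))\<^sup>2)) \<longlongrightarrow> G) (at_right 0)"
    by (auto intro!: tendsto_eq_intros)
  ultimately have "0 \<le> G" by (intro tendsto_lowerbound) auto
  then show ?thesis unfolding G_def by simp
qed

lemma strongly_convex_onD:
  assumes "strongly_convex_on H \<phi> m" "x \<in> H" "y \<in> H" "0 \<le> t" "t \<le> 1"
  shows "\<phi> (t *\<^sub>R x + (1 - t) *\<^sub>R y) \<le> t * \<phi> x + (1 - t) * \<phi> y - m / 2 * t * (1 - t) * (norm (x - y))\<^sup>2"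
  using assms unfolding strongly_convex_on_def by blast

lemma strongly_convex_approx_subgradient:
  fixes \<phi> g :: "'a::real_inner \<Rightarrow> real"
  assumes sc: "strongly_convex_on H \<phi> m" and uH: "u \<in> H" and yH: "y \<in> H"
    and subgrad: "\<And>w. w \<in> H \<Longrightarrow> g y + inner s (w - y) \<le> g w"
    and minorant: "\<And>w. w \<in> H \<Longrightarrow> g w \<le> \<phi> w"
    and gap: "\<phi> y \<le> g y + \<delta> / 2"
  shows "\<phi> y + inner s (u - y) + m / 4 * (norm (u - y))\<^sup>2 - \<delta> \<le> \<phi> u"
proof -
  define w where "w = (1 / 2) *\<^sub>R u + (1 - 1 / 2) *\<^sub>R y"
  have "w \<in> H" using sc uH yH unfolding w_def strongly_convex_on_def by (simp add: convex_def)
  have "w - y = (1 / 2) *\<^sub>R (u - y)" unfolding w_def by (simp add: algebra_simps flip: scaleR_add_left)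
  then have "inner s (w - y) = inner s (u - y) / 2" by simp
  then have "\<phi> y - \<delta> / 2 + inner s (u - y) / 2 \<le> \<phi> w"
    using subgrad[OF \<open>w \<in> H\<close>] minorant[OF \<open>w \<in> H\<close>] gap by linarith
  also have "\<phi> w \<le> 1 / 2 * \<phi> u + (1 - 1 / 2) * \<phi> y - m / 2 * (1 / 2) * (1 - 1 / 2) * (norm (u - y))\<^sup>2"
    unfolding w_def by (rule strongly_convex_onD[OF sc uH yH]) simp_all
  finally show ?thesis by simp
qed

lemma prox_step_lower_model:
  fixes f h :: "'a::real_inner \<Rightarrow> real"
  assumes lin_le: "\<And>u v. lin_f f gf u v \<le> f u"
    and H: "convex H" and h: "convex_on H h" and sc: "strongly_convex_on H (\<lambda>u. f u + h u) m"
    and y: "y \<in> H"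
    and argmin: "\<forall>u\<in>H. lin_f f gf y xt + h y + L / 2 * (norm (y - xt))\<^sup>2
                        \<le> lin_f f gf u xt + h u + L / 2 * (norm (u - xt))\<^sup>2"
    and accept: "f y \<le> lin_f f gf y xt + (1 - chi) * L / 4 * (norm (y - xt))\<^sup>2"
    and u: "u \<in> H"
  shows "f y + h y + inner (L *\<^sub>R (xt - y)) (u - y) + m / 4 * (norm (u - y))\<^sup>2
           - (1 - chi) * L / 2 * (norm (y - xt))\<^sup>2 \<le> f u + h u"
proof (rule strongly_convex_approx_subgradient[OF sc u y, where g = "\<lambda>u. lin_f f gf u xt + h u"])
  show "lin_f f gf y xt + h y + inner (L *\<^sub>R (xt - y)) (w - y) \<le> lin_f f gf w xt + h w"
    if "w \<in> H" for w
    using argmin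
    by (intro prox_argmin_subgradient[OF H convex_on_add[OF convex_on_lin_f[OF H] h] y that]) simp
  show "lin_f f gf w xt + h w \<le> f w + h w" for w using lin_le by simp
  show "f y + h y \<le> lin_f f gf y xt + h y + (1 - chi) * L / 2 * (norm (y - xt))\<^sup>2 / 2"
    using accept by simp
qed

lemma inner_add_half_norm_ge:
  fixes s v :: "'a::real_inner"
  assumes "t > 0"
  shows "- a\<^sup>2 * (norm s)\<^sup>2 / (2 * t) \<le> a * inner s v + t / 2 * (norm v)\<^sup>2"
proof -
  have "(norm (t *\<^sub>R v + a *\<^sub>R s))\<^sup>2 = t\<^sup>2 * (norm v)\<^sup>2 + 2 * t * a * inner s v + a\<^sup>2 * (norm s)\<^sup>2"
    by (simp only: power2_norm_add) (simp add: power_mult_distrib inner_commute)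
  then have "a * inner s v + t / 2 * (norm v)\<^sup>2 + a\<^sup>2 * (norm s)\<^sup>2 / (2 * t)
      = (norm (t *\<^sub>R v + a *\<^sub>R s))\<^sup>2 / (2 * t)"
    using assms by (simp add: field_simps power2_eq_square)
  also have "\<dots> \<ge> 0" using assms by simp
  finally show ?thesis by linarith
qed

lemma quadratic_estimate_ge:
  fixes z x0 y s x1 :: "'a::real_inner"
  assumes t0: "t0 > 0" and c: "c \<ge> 0" and t1: "t1 = t0 + c"
    and x1: "t1 *\<^sub>R x1 = t0 *\<^sub>R x0 + c *\<^sub>R y - a *\<^sub>R s"
  shows "- a\<^sup>2 * (norm s)\<^sup>2 / (2 * t0)
    \<le> a * inner s (z - x0) + c / 2 * (norm (z - y))\<^sup>2 + t0 / 2 * (norm (z - x0))\<^sup>2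
       - t1 / 2 * (norm (z - x1))\<^sup>2"
proof -
  \<comment> \<open>\<psi> is quadratic with Hessian t1, and x1 is its critical point\<close>
  define \<psi> where "\<psi> v = a * inner s (v - x0) + c / 2 * (norm (v - y))\<^sup>2 + t0 / 2 * (norm (v - x0))\<^sup>2" for v
  define d where "d = z - x1"
  have grad_zero: "a *\<^sub>R s + c *\<^sub>R (x1 - y) + t0 *\<^sub>R (x1 - x0) = 0"
    using x1 unfolding t1 by (simp add: algebra_simps)
  have "z - x0 = d + (x1 - x0)" "z - y = d + (x1 - y)" unfolding d_def by simp_all
  then have expand: "(norm (z - x0))\<^sup>2 = (norm d)\<^sup>2 + 2 * inner d (x1 - x0) + (norm (x1 - x0))\<^sup>2"
      "(norm (z - y))\<^sup>2 = (norm d)\<^sup>2 + 2 * inner d (x1 - y) + (norm (x1 - y))\<^sup>2"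
      "inner s (z - x0) = inner s d + inner s (x1 - x0)"
    by (simp_all only: power2_norm_add inner_add_right)
  have "\<psi> z = \<psi> x1 + t1 / 2 * (norm d)\<^sup>2 + inner d (a *\<^sub>R s + c *\<^sub>R (x1 - y) + t0 *\<^sub>R (x1 - x0))"
    unfolding \<psi>_def t1 expand by (simp add: inner_add_right inner_commute algebra_simps)
  then have "\<psi> z = \<psi> x1 + t1 / 2 * (norm (z - x1))\<^sup>2" unfolding grad_zero d_def by simp
  moreover have "- a\<^sup>2 * (norm s)\<^sup>2 / (2 * t0) \<le> \<psi> x1"
  proof -
    have "0 \<le> c / 2 * (norm (x1 - y))\<^sup>2" using c by simp
    then show ?thesis using inner_add_half_norm_ge[OF t0, of a s "x1 - x0"] unfolding \<psi>_def by linarith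
  qed
  ultimately show ?thesis unfolding \<psi>_def by simp
qed

lemma step_size_pos:
  fixes \<tau> A L :: real
  assumes "\<tau> > 0" "A \<ge> 0" "L > 0"
  shows "(\<tau> + sqrt (\<tau>\<^sup>2 + 4 * \<tau> * A * L)) / (2 * L) > 0"
  using assms by (simp add: add_pos_nonneg)

lemma step_size_square:
  fixes \<tau> A L :: real
  assumes "\<tau> \<ge> 0" "A \<ge> 0" "L > 0" and a: "a = (\<tau> + sqrt (\<tau>\<^sup>2 + 4 * \<tau> * A * L)) / (2 * L)"
  shows "L * a\<^sup>2 = \<tau> * (A + a)"
proof -
  define D where "D = \<tau>\<^sup>2 + 4 * \<tau> * A * L"
  have "(sqrt D)\<^sup>2 = D" unfolding D_def using assms by simp
  then show ?thesis
    using assms unfolding a D_def[symmetric]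
    by (simp add: field_simps power2_eq_square) (simp add: D_def algebra_simps power2_eq_square)
qed

lemma sfista_iteration_decrease:
  fixes f h :: "'a::real_inner \<Rightarrow> real" and x0 y0 xt y x z :: 'a
  assumes lin_le: "\<And>u v. lin_f f gf u v \<le> f u"
    and H: "convex H" and h: "convex_on H h"
    and sc: "strongly_convex_on H (\<lambda>u. f u + h u) mubar" and mu: "0 < mu" "mu \<le> mubar"
    and tau0: "tau0 > 0" and A0: "A0 \<ge> 0" and L: "L > 0"
    and a: "a = (tau0 + sqrt (tau0\<^sup>2 + 4 * tau0 * A0 * L)) / (2 * L)"
    and A: "A = A0 + a" and tau: "tau = tau0 + a * mu / 2"
    and xt: "xt = (1 / (A0 + a)) *\<^sub>R (A0 *\<^sub>R y0 + a *\<^sub>R x0)"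
    and y: "y \<in> H"
    and argmin: "\<forall>u\<in>H. lin_f f gf y xt + h y + L / 2 * (norm (y - xt))\<^sup>2
                        \<le> lin_f f gf u xt + h u + L / 2 * (norm (u - xt))\<^sup>2"
    and accept: "f y \<le> lin_f f gf y xt + (1 - chi) * L / 4 * (norm (y - xt))\<^sup>2"
    and x: "x = (1 / tau) *\<^sub>R ((mu * a / 2) *\<^sub>R y + tau0 *\<^sub>R x0 - a *\<^sub>R (L *\<^sub>R (xt - y)))"
    and y0: "y0 \<in> H" and z: "z \<in> H"
  shows "(A0 * ((f y0 + h y0) - (f z + h z)) + tau0 / 2 * (norm (z - x0))\<^sup>2)
         - (A * ((f y + h y) - (f z + h z)) + tau / 2 * (norm (z - x))\<^sup>2)
       \<ge> chi * A * L / 2 * (norm (y - xt))\<^sup>2"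
proof -
  define \<phi> where "\<phi> u = f u + h u" for u
  define s where "s = L *\<^sub>R (xt - y)"
  define r where "r = (norm (y - xt))\<^sup>2"
  have a_pos: "a > 0" unfolding a using step_size_pos[OF tau0 A0 L] .
  have a_sq: "L * a\<^sup>2 = tau0 * A" unfolding A using step_size_square[OF _ A0 L a] tau0 by simp
  have model: "\<phi> y + inner s (u - y) + mubar / 4 * (norm (u - y))\<^sup>2 - (1 - chi) * L / 2 * r \<le> \<phi> u"
    if "u \<in> H" for u
    unfolding \<phi>_def s_def r_def by (rule prox_step_lower_model[OF lin_le H h sc y argmin accept that])
  have model_y0: "\<phi> y + inner s (y0 - y) - (1 - chi) * L / 2 * r \<le> \<phi> y0"
  proof -
    have "0 \<le> mubar / 4 * (norm (y0 - y))\<^sup>2" using mu by simp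
    then show ?thesis using model[OF y0] by linarith
  qed
  have model_z: "\<phi> y + inner s (z - y) + mu / 4 * (norm (z - y))\<^sup>2 - (1 - chi) * L / 2 * r \<le> \<phi> z"
  proof -
    have "mu / 4 * (norm (z - y))\<^sup>2 \<le> mubar / 4 * (norm (z - y))\<^sup>2" using mu by (simp add: mult_right_mono)
    then show ?thesis using model[OF z] by linarith
  qed
  have tau_pos: "tau > 0" unfolding tau using tau0 a_pos mu by (simp add: add_pos_pos)
  have "tau *\<^sub>R x = tau0 *\<^sub>R x0 + (a * mu / 2) *\<^sub>R y - a *\<^sub>R s"
    unfolding x s_def using tau_pos by (simp add: algebra_simps)
  then have quad: "- a\<^sup>2 * (norm s)\<^sup>2 / (2 * tau0) \<le> a * inner s (z - x0)
      + (a * mu / 2) / 2 * (norm (z - y))\<^sup>2 + tau0 / 2 * (norm (z - x0))\<^sup>2 - tau / 2 * (norm (z - x))\<^sup>2"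
    using quadratic_estimate_ge[OF tau0 _ tau] a_pos mu by simp
  have "A *\<^sub>R xt = A0 *\<^sub>R y0 + a *\<^sub>R x0" unfolding xt A using A0 a_pos by simp
  then have "A0 *\<^sub>R (y0 - y) + a *\<^sub>R (z - y) = A *\<^sub>R (xt - y) + a *\<^sub>R (z - x0)"
    unfolding A by (simp add: algebra_simps)
  then have "A0 * inner s (y0 - y) + a * inner s (z - y) = A * inner s (xt - y) + a * inner s (z - x0)"
    by (metis inner_add_right inner_scaleR_right)
  moreover have "inner s (xt - y) = L * r"
    unfolding s_def r_def by (simp add: dot_square_norm norm_minus_commute)
  ultimately have inner_sum: "A0 * inner s (y0 - y) + a * inner s (z - y) = A * L * r + a * inner s (z - x0)"
    by simp
  \<comment> \<open>the step size a is chosen precisely so that this term is half of the gain A L r\<close>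
  have norm_s: "a\<^sup>2 * (norm s)\<^sup>2 / (2 * tau0) = A * L * r / 2"
  proof -
    have "(norm s)\<^sup>2 = L\<^sup>2 * r"
      unfolding s_def r_def by (simp add: power_mult_distrib norm_minus_commute)
    then have "a\<^sup>2 * (norm s)\<^sup>2 = L * r * (L * a\<^sup>2)" by (simp add: power2_eq_square)
    then show ?thesis unfolding a_sq using tau0 by simp
  qed
  have "A0 * \<phi> y + A0 * inner s (y0 - y) - A0 * ((1 - chi) * L / 2 * r) \<le> A0 * \<phi> y0"
    using mult_left_mono[OF model_y0 A0] by (simp add: algebra_simps)
  moreover have "a * \<phi> y + a * inner s (z - y) + a * (mu / 4 * (norm (z - y))\<^sup>2) - a * ((1 - chi) * L / 2 * r)
      \<le> a * \<phi> z"
    using mult_left_mono[OF model_z, of a] a_pos by (simp add: algebra_simps)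
  moreover have "A * (\<phi> y - \<phi> z) = A0 * \<phi> y + a * \<phi> y - A0 * \<phi> z - a * \<phi> z"
    "A0 * (\<phi> y0 - \<phi> z) = A0 * \<phi> y0 - A0 * \<phi> z"
    "- a\<^sup>2 * (norm s)\<^sup>2 / (2 * tau0) = - (a\<^sup>2 * (norm s)\<^sup>2 / (2 * tau0))"
    "A * ((1 - chi) * L / 2 * r) = A0 * ((1 - chi) * L / 2 * r) + a * ((1 - chi) * L / 2 * r)"
    "(a * mu / 2) / 2 * (norm (z - y))\<^sup>2 = a * (mu / 4 * (norm (z - y))\<^sup>2)"
    "chi * A * L / 2 * r = A * L * r - A * L * r / 2 - A * ((1 - chi) * L / 2 * r)"
    unfolding A by (simp_all add: field_simps)
  ultimately have "(A0 * (\<phi> y0 - \<phi> z) + tau0 / 2 * (norm (z - x0))\<^sup>2) - (A * (\<phi> y - \<phi> z) + tau / 2 * (norm (z - x))\<^sup>2)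
      \<ge> chi * A * L / 2 * r"
    using quad inner_sum norm_s by linarith
  then show ?thesis unfolding \<phi>_def r_def .
qed

theorem lemmaA6:
  fixes f h :: "real ^ 'n \<Rightarrow> real"
    and gf :: "real ^ 'n \<Rightarrow> real ^ 'n"
    and H :: "(real ^ 'n) set"
    and Lbar mubar chi beta mu epshat :: real
    and N :: nat
    and L a A tau :: "nat \<Rightarrow> real"
    and x y xt xi :: "nat \<Rightarrow> real ^ 'n"
  assumes f_grad: "\<And>z. (f has_derivative (\<lambda>d. inner (gf z) d)) (at z)"
    and f_convex: "convex_on UNIV f"
    and f_lip: "\<And>z z'. norm (gf z' - gf z) \<le> Lbar * norm (z' - z)"
    and Lbar_nonneg: "Lbar \<ge> 0"
    and h_plc: "proper_lsc_convex h H"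
    and phi_sc: "strongly_convex_on H (\<lambda>u. f u + h u) mubar"
    and mubar_pos: "mubar > 0"
    and chi: "0 < chi" "chi < 1"
    and beta: "beta > 1"
    and epshat: "epshat > 0"
    and mu: "0 < mu" "mu \<le> mubar"
    \<comment> \<open>initialization of the cycle\<close>
    and x0: "x 0 \<in> H"
    and y0: "y 0 = x 0"
    and xi0: "xi 0 = x 0"
    and A0: "A 0 = 0"
    and tau0: "tau 0 = 1"
    and L0: "L 0 > 0"
    \<comment> \<open>iterations j = 1..N of the cycle, with accepted line-search values\<close>
    and L_ls: "\<And>j. 1 \<le> j \<Longrightarrow> j \<le> N \<Longrightarrow> \<exists>k::nat. L j = beta ^ k * L (j - 1)"
    and a_def: "\<And>j. 1 \<le> j \<Longrightarrow> j \<le> N \<Longrightarrow>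
       a (j - 1) = (tau (j - 1) + sqrt ((tau (j - 1))\<^sup>2 + 4 * tau (j - 1) * A (j - 1) * L j)) / (2 * L j)"
    and xt_def: "\<And>j. 1 \<le> j \<Longrightarrow> j \<le> N \<Longrightarrow>
       xt (j - 1) = (1 / (A (j - 1) + a (j - 1))) *\<^sub>R (A (j - 1) *\<^sub>R y (j - 1) + a (j - 1) *\<^sub>R x (j - 1))"
    and y_argmin: "\<And>j. 1 \<le> j \<Longrightarrow> j \<le> N \<Longrightarrow> y j \<in> H \<and>
       (\<forall>u\<in>H. lin_f f gf (y j) (xt (j - 1)) + h (y j) + L j / 2 * (norm (y j - xt (j - 1)))\<^sup>2
               \<le> lin_f f gf u (xt (j - 1)) + h u + L j / 2 * (norm (u - xt (j - 1)))\<^sup>2)"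
    and ls_accept: "\<And>j. 1 \<le> j \<Longrightarrow> j \<le> N \<Longrightarrow>
       f (y j) \<le> lin_f f gf (y j) (xt (j - 1)) + (1 - chi) * L j / 4 * (norm (y j - xt (j - 1)))\<^sup>2"
    and xi_def: "\<And>j. 1 \<le> j \<Longrightarrow> j \<le> N \<Longrightarrow>
       xi j = (if f (y j) + h (y j) \<le> f (xi (j - 1)) + h (xi (j - 1)) then y j else xi (j - 1))"
    and A_def: "\<And>j. 1 \<le> j \<Longrightarrow> j \<le> N \<Longrightarrow> A j = A (j - 1) + a (j - 1)"
    and tau_def: "\<And>j. 1 \<le> j \<Longrightarrow> j \<le> N \<Longrightarrow> tau j = tau (j - 1) + a (j - 1) * mu / 2"
    and x_def: "\<And>j. 1 \<le> j \<Longrightarrow> j \<le> N \<Longrightarrow>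
       x j = (1 / tau j) *\<^sub>R ((mu * a (j - 1) / 2) *\<^sub>R y j + tau (j - 1) *\<^sub>R x (j - 1)
                                 - a (j - 1) *\<^sub>R (L j *\<^sub>R (xt (j - 1) - y j)))"
    \<comment> \<open>iterations 1..N-1 neither restarted nor stopped, so iteration N is generated in this cycle\<close>
    and no_restart: "\<And>j. 1 \<le> j \<Longrightarrow> j < N \<Longrightarrow>
       \<not> ((norm (xi j - x 0))\<^sup>2 < chi * A j * L j * (norm (y j - xt (j - 1)))\<^sup>2)"
    and no_stop: "\<And>j. 1 \<le> j \<Longrightarrow> j < N \<Longrightarrow>
       \<not> (norm (gf (y j) - gf (xt (j - 1)) + L j *\<^sub>R (xt (j - 1) - y j)) \<le> epshat)"
    and j: "1 \<le> j" "j \<le> N"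
    and xH: "z \<in> H"
  shows "let \<sigma> = (\<lambda>i. A i * ((f (y i) + h (y i)) - (f z + h z)) + tau i / 2 * (norm (z - x i))\<^sup>2)
         in \<sigma> (j - 1) - \<sigma> j \<ge> chi * A j * L j / 2 * (norm (y j - xt (j - 1)))\<^sup>2"
proof -
  have H: "convex H" and h: "convex_on H h" using h_plc unfolding proper_lsc_convex_def by auto
  have lin_le: "\<And>u v. lin_f f gf u v \<le> f u" using lin_f_le_convex[OF f_grad f_convex] .
  have pos: "i \<le> N \<Longrightarrow> 0 < L i \<and> 0 < tau i \<and> 0 \<le> A i" for i
  proof (induction i)
    case 0
    then show ?case using L0 tau0 A0 by simp
  next
    case (Suc i)
    then have IH: "L i > 0" "tau i > 0" "A i \<ge> 0" by auto
    obtain k where "L (Suc i) = beta ^ k * L i" using L_ls[of "Suc i"] Suc.prems by auto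
    then have L: "L (Suc i) > 0" using IH beta by simp
    have "a i > 0" using a_def[of "Suc i"] Suc.prems step_size_pos[OF IH(2,3) L] by simp
    then have "a i * mu / 2 > 0" using mu by simp
    then show ?case using tau_def[of "Suc i"] A_def[of "Suc i"] Suc.prems IH L \<open>a i > 0\<close> by simp
  qed
  obtain i where i: "j = Suc i" using j by (cases j) auto
  have y_prev: "y i \<in> H" using x0 y0 y_argmin[of i] j i by (cases i) auto
  show ?thesis unfolding Let_def i diff_Suc_1
    by (rule sfista_iteration_decrease[where a = "a i" and xt = "xt i", OF lin_le H h phi_sc mu])
      (use pos[of i] pos[of j] j y_prev xH a_def[of j] A_def[of j] tau_def[of j] xt_def[of j]
      y_argmin[of j] ls_accept[of j] x_def[of j] in \<open>auto simp: i\<close>)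
qed

end
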